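(* Neither $\mathbf{X}_6$ nor $\mathbf{X}_7$ is mutation-equivalent to any of the nine graphs $\mathbf{E}_6,\mathbf{E}_7,\mathbf{E}_8,\widehat{\mathbf{E}}_6,\widehat{\mathbf{E}}_7,\widehat{\mathbf{E}}_8,\mathbf{E}_6^{(1,1)},\mathbf{E}_7^{(1,1)},\mathbf{E}_8^{(1,1)}$.
   Context: A graph here is a finite directed multigraph with no loops and no oriented $2$-cycles; multiple arrows in the same direction are allowed. The mutation $\mu_k\Gamma$ at a vertex $k$: for every pair of arrows $i\to k$, $k\to j$ add an arrow $i\to j$; reverse all arrows incident to $k$; then delete pairs of opposite arrows $i\to j$, $j\to i$ until no oriented $2$-cycles remain. Two graphs are mutation-equivalent if one is obtained from the other by a sequence of mutations and a relabeling of vertices. $\mathbf{X}_6$: vertices $x,w,y_1,z_1,y_2,z_2$; for $i=1,2$: two arrows $y_i\to z_i$, one arrow $z_i\to x$, one arrow $x\to y_i$; plus one arrow $w\to x$. $\mathbf{X}_7$: vertices $x,y_i,z_i$ ($i=1,2,3$); for each $i=1,2,3$: two arrows $y_i\to z_i$, one arrow $z_i\to x$, one arrow $x\to y_i$. For positive integers $a,b,c$ let $T(a,b,c)$ be the tree consisting of a central vertex $o$ and three paths (arms) attached to $o$ with $a$, $b$, $c$ further vertices respectively, every arrow being a single arrow directed toward $o$ (i.e. an arm $v_m\to v_{m-1}\to\cdots\to v_1\to o$). Then $\mathbf{E}_6=T(1,2,2)$, $\mathbf{E}_7=T(1,2,3)$, $\mathbf{E}_8=T(1,2,4)$, $\widehat{\mathbf{E}}_6=T(2,2,2)$,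 $\widehat{\mathbf{E}}_7=T(1,3,3)$, $\widehat{\mathbf{E}}_8=T(1,2,5)$. For nonnegative integers $(k_1,k_2,k_3)$ let $S(k_1,k_2,k_3)$ be the graph with vertices $a,b,p_1,p_2,p_3$ and, for each $i$, vertices $t^{(i)}_1,\dots,t^{(i)}_{k_i}$, with arrows: two arrows $b\to a$; for each $i$ a single arrow $a\to p_i$ and a single arrow $p_i\to b$; and single arrows $t^{(i)}_{k_i}\to\cdots\to t^{(i)}_1\to p_i$. Then $\mathbf{E}_6^{(1,1)}=S(1,1,1)$, $\mathbf{E}_7^{(1,1)}=S(2,0,2)$, $\mathbf{E}_8^{(1,1)}=S(1,0,4)$. *)

theory Defs
  imports Main
begin

text \<open>A graph (finite directed multigraph) on the vertex set {0..<n} is encoded as a pair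
  (n, m) where m i j is the number of arrows from i to j (zero outside the vertex set).\<close>

type_synonym graph = "nat \<times> (nat \<Rightarrow> nat \<Rightarrow> nat)"

definition wf_graph :: "graph \<Rightarrow> bool" where
  "wf_graph G \<longleftrightarrow> (\<forall>i j. (fst G \<le> i \<or> fst G \<le> j) \<longrightarrow> snd G i j = 0)
      \<and> (\<forall>i. snd G i i = 0) \<and> (\<forall>i j. snd G i j = 0 \<or> snd G j i = 0)"

text \<open>Mutation at k, literally: first add an arrow i->j for every pair i->k, k->j and
  reverse all arrows at k (multiplicities premut); then cancel opposite pairs.\<close>

definition premut :: "nat \<Rightarrow> (nat \<Rightarrow> nat \<Rightarrow> nat) \<Rightarrow> nat \<Rightarrow> nat \<Rightarrow> nat" where
  "premut k m i j =
     (if i = k then m j k else if j = k then m k i else m i j + m i k * m k j)"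

definition mutate :: "nat \<Rightarrow> (nat \<Rightarrow> nat \<Rightarrow> nat) \<Rightarrow> nat \<Rightarrow> nat \<Rightarrow> nat" where
  "mutate k m i j = premut k m i j - premut k m j i"

definition mut_step :: "graph \<Rightarrow> graph \<Rightarrow> bool" where
  "mut_step G H \<longleftrightarrow> fst H = fst G \<and>
     ((\<exists>k < fst G. snd H = mutate k (snd G)) \<or>
      (\<exists>\<sigma>. bij_betw \<sigma> {..<fst G} {..<fst G}
          \<and> (\<forall>i j. i < fst G \<longrightarrow> j < fst G \<longrightarrow> snd H (\<sigma> i) (\<sigma> j) = snd G i j)
          \<and> (\<forall>i j. (fst G \<le> i \<or> fst G \<le> j) \<longrightarrow> snd H i j = 0)))"

definition mut_equiv :: "graph \<Rightarrow> graph \<Rightarrow> bool" where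
  "mut_equiv G H \<longleftrightarrow> mut_step\<^sup>*\<^sup>* G H"

definition graph_of :: "nat \<Rightarrow> (nat \<times> nat) list \<Rightarrow> graph" where
  "graph_of n es = (n, \<lambda>i j. if i < n \<and> j < n then length (filter (\<lambda>e. e = (i, j)) es) else 0)"

text \<open>A path of l vertices s+1, ..., s+l, arrows s+l -> ... -> s+1 -> r.\<close>

definition arm :: "nat \<Rightarrow> nat \<Rightarrow> nat \<Rightarrow> (nat \<times> nat) list" where
  "arm s l r = (if l = 0 then [] else [(s + 1, r)]) @ map (\<lambda>t. (s + t + 1, s + t)) [1..<l]"

text \<open>X6: x=0, w=1, y1=2, z1=3, y2=4, z2=5.\<close>
definition X6 :: graph where
  "X6 = graph_of 6 [(2,3),(2,3),(3,0),(0,2),(4,5),(4,5),(5,0),(0,4),(1,0)]"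

text \<open>X7: x=0, y1=1, z1=2, y2=3, z2=4, y3=5, z3=6.\<close>
definition X7 :: graph where
  "X7 = graph_of 7 [(1,2),(1,2),(2,0),(0,1),(3,4),(3,4),(4,0),(0,3),(5,6),(5,6),(6,0),(0,5)]"

text \<open>T(a,b,c): centre o=0, arms on 1..a, a+1..a+b, a+b+1..a+b+c.\<close>
definition Tgraph :: "nat \<Rightarrow> nat \<Rightarrow> nat \<Rightarrow> graph" where
  "Tgraph a b c = graph_of (1 + a + b + c) (arm 0 a 0 @ arm a b 0 @ arm (a + b) c 0)"

text \<open>S(k1,k2,k3): a=0, b=1, p_i = i+1 (i=1,2,3), tails starting at 5, 5+k1, 5+k1+k2.\<close>
definition Sgraph :: "nat \<Rightarrow> nat \<Rightarrow> nat \<Rightarrow> graph" where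
  "Sgraph k1 k2 k3 = graph_of (5 + k1 + k2 + k3)
     ([(1,0),(1,0),(0,2),(2,1),(0,3),(3,1),(0,4),(4,1)]
      @ arm 4 k1 2 @ arm (4 + k1) k2 3 @ arm (4 + k1 + k2) k3 4)"

end

theory Submission
  imports Defs
begin

text \<open>Modulo 2, mutation replaces the symmetrised adjacency matrix \<open>m + m\<^sup>T\<close> by a congruent
  matrix, so the size of its kernel over GF(2) is a mutation invariant; relabelling preserves it
  as well, and neither operation changes the number of vertices. Among the nine target graphs
  only \<open>E\<^sub>6\<close> has six vertices, and its kernel is trivial, whereas that of \<open>X\<^sub>6\<close> is not.
  The seven-vertex targets \<open>E\<^sub>7\<close> and affine \<open>E\<^sub>6\<close> have kernels with at most two elements,
  while the kernel of \<open>X\<^sub>7\<close> has at least three.\<close>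

definition arrows_between :: "(nat \<Rightarrow> nat \<Rightarrow> nat) \<Rightarrow> nat \<Rightarrow> nat set \<Rightarrow> nat" where
  "arrows_between m i S = (\<Sum>j\<in>S. m i j + m j i)"

text \<open>A set of vertices stands for its characteristic vector over GF(2), so this is the kernel
  of \<open>m + m\<^sup>T\<close> modulo 2.\<close>

definition mod2_kernel :: "graph \<Rightarrow> nat set set" where
  "mod2_kernel G = {S. S \<subseteq> {..<fst G} \<and> (\<forall>i<fst G. even (arrows_between (snd G) i S))}"

lemma finite_mod2_kernel: "finite (mod2_kernel G)"
  unfolding mod2_kernel_def by (rule finite_subset[of _ "Pow {..<fst G}"]) auto

definition toggle :: "nat \<Rightarrow> nat set \<Rightarrow> nat set" where
  "toggle k S = (if k \<in> S then S - {k} else insert k S)"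

text \<open>The change of basis matching the kernel after a mutation at \<open>k\<close> with the kernel before it.\<close>

definition kernel_transfer :: "(nat \<Rightarrow> nat \<Rightarrow> nat) \<Rightarrow> nat \<Rightarrow> nat set \<Rightarrow> nat set" where
  "kernel_transfer m k S = (if odd (\<Sum>l\<in>S. m k l) then toggle k S else S)"

lemma toggle_toggle [simp]: "toggle k (toggle k S) = S"
  unfolding toggle_def by auto

lemma sum_toggle: "f k = 0 \<Longrightarrow> finite S \<Longrightarrow> sum f (toggle k S) = sum f S"
  unfolding toggle_def by (auto simp: sum.remove sum.insert_remove)

lemma even_sum_toggle:
  fixes f :: "nat \<Rightarrow> nat"
  assumes "finite S"
  shows "even (sum f (toggle k S)) \<longleftrightarrow> even (sum f S + f k)"
proof (cases "k \<in> S")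
  case True
  then have "sum f S = sum f (toggle k S) + f k"
    unfolding toggle_def using assms by (simp add: sum.remove)
  then show ?thesis by presburger
qed (use assms in \<open>auto simp: toggle_def\<close>)

lemma even_sum_cong:
  fixes f g :: "'a \<Rightarrow> nat"
  assumes "\<And>x. x \<in> A \<Longrightarrow> even (f x) \<longleftrightarrow> even (g x)"
  shows "even (sum f A) \<longleftrightarrow> even (sum g A)"
proof (cases "finite A")
  case True
  moreover have "{x \<in> A. odd (f x)} = {x \<in> A. odd (g x)}" using assms by blast
  ultimately show ?thesis by (simp add: even_sum_iff)
qed simp

lemma even_diff_add_diff: "even ((a::nat) - b + (b - a)) \<longleftrightarrow> even (a + b)"
  by (cases "a \<le> b") (simp_all add: even_diff_nat add.commute)

lemma even_mutate_add_mutate: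
  assumes "m k k = 0"
  shows "even (mutate k m i j + mutate k m j i)
    \<longleftrightarrow> even (m i j + m j i + m i k * m k j + m j k * m k i)"
proof -
  have "even (mutate k m i j + mutate k m j i) \<longleftrightarrow> even (premut k m i j + premut k m j i)"
    unfolding mutate_def by (rule even_diff_add_diff)
  also have "premut k m i j + premut k m j i = m i j + m j i + m i k * m k j + m j k * m k i"
    using assms by (simp add: premut_def add_ac mult_ac)
  finally show ?thesis .
qed

lemma even_arrows_between_mutate:
  assumes "m k k = 0"
  shows "even (arrows_between (mutate k m) i S)
    \<longleftrightarrow> even (arrows_between m i S + m i k * (\<Sum>l\<in>S. m k l) + m k i * (\<Sum>l\<in>S. m l k))"
proof -
  have "arrows_between m i S + m i k * (\<Sum>l\<in>S. m k l) + m k i * (\<Sum>l\<in>S. m l k)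
      = (\<Sum>j\<in>S. m i j + m j i + m i k * m k j + m j k * m k i)"
    unfolding arrows_between_def by (simp add: sum.distrib sum_distrib_left algebra_simps)
  then show ?thesis
    unfolding arrows_between_def using even_mutate_add_mutate[of m k, OF assms]
    by (simp add: even_sum_cong)
qed

lemma kernel_transfer_involution:
  "m k k = 0 \<Longrightarrow> finite S \<Longrightarrow> kernel_transfer m k (kernel_transfer m k S) = S"
  unfolding kernel_transfer_def using sum_toggle[of "m k" k S] by auto

lemma kernel_transfer_subset: "k < n \<Longrightarrow> S \<subseteq> {..<n} \<Longrightarrow> kernel_transfer m k S \<subseteq> {..<n}"
  unfolding kernel_transfer_def toggle_def by auto

lemma all_even_arrows_between_mutate_iff:
  assumes "k < n" "m k k = 0" "finite S"
  shows "(\<forall>i<n. even (arrows_between (mutate k m) i S))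
    \<longleftrightarrow> (\<forall>i<n. even (arrows_between m i (kernel_transfer m k S)))"
proof -
  define out where "out = (\<Sum>l\<in>S. m k l)"
  define inn where "inn = (\<Sum>l\<in>S. m l k)"
  have mutated: "even (arrows_between (mutate k m) i S)
      \<longleftrightarrow> even (arrows_between m i S + m i k * out + m k i * inn)" for i
    using even_arrows_between_mutate[of m k, OF assms(2)] by (simp add: out_def inn_def)
  have transferred: "even (arrows_between m i (kernel_transfer m k S))
      \<longleftrightarrow> even (arrows_between m i S + (if odd out then m i k + m k i else 0))" for i
    using even_sum_toggle[OF assms(3), of "\<lambda>j. m i j + m j i" k]
    by (simp add: kernel_transfer_def arrows_between_def out_def add.assoc)
  have at_k: "arrows_between m k S = out + inn"
    unfolding arrows_between_def out_def inn_def by (simp add: sum.distrib)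
  txt \<open>Evenness at \<open>k\<close> itself forces \<open>out\<close> and \<open>inn\<close> to have the same parity, and then the two
    correction terms agree at every other vertex.\<close>
  have "even (out + inn) \<Longrightarrow> even (arrows_between (mutate k m) i S)
      \<longleftrightarrow> even (arrows_between m i (kernel_transfer m k S))" for i
    using mutated transferred by auto
  moreover have "even (arrows_between (mutate k m) k S) \<longleftrightarrow> even (out + inn)"
    "even (arrows_between m k (kernel_transfer m k S)) \<longleftrightarrow> even (out + inn)"
    using mutated[of k] transferred[of k] at_k assms(2) by simp_all
  ultimately show ?thesis using assms(1) by metis
qed

lemma card_mod2_kernel_mutate:
  assumes "k < n" "m k k = 0"
  shows "card (mod2_kernel (n, mutate k m)) = card (mod2_kernel (n, m))"
proof -
  have transfer_mem: "S \<in> mod2_kernel (n, mutate k m) \<longleftrightarrow> kernel_transfer m k S \<in> mod2_kernel (n, m)"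
    if "S \<subseteq> {..<n}" for S
    using all_even_arrows_between_mutate_iff[of k n m S, OF assms finite_subset[OF that]]
      kernel_transfer_subset[OF assms(1) that] that
    by (simp add: mod2_kernel_def)
  have involution: "kernel_transfer m k (kernel_transfer m k S) = S" if "S \<subseteq> {..<n}" for S
    using kernel_transfer_involution[of m k S, OF assms(2) finite_subset[OF that]] by simp
  have "bij_betw (kernel_transfer m k) (mod2_kernel (n, mutate k m)) (mod2_kernel (n, m))"
    by (rule bij_betw_byWitness[where f' = "kernel_transfer m k"])
      (use transfer_mem involution kernel_transfer_subset[OF assms(1)]
        in \<open>fastforce simp: mod2_kernel_def\<close>)+
  then show ?thesis by (rule bij_betw_same_card)
qed

lemma mod2_kernel_relabel:
  assumes \<sigma>: "bij_betw \<sigma> {..<n} {..<n}"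
    and h: "\<forall>i j. i < n \<longrightarrow> j < n \<longrightarrow> h (\<sigma> i) (\<sigma> j) = g i j"
  shows "mod2_kernel (n, h) = image \<sigma> ` mod2_kernel (n, g)"
proof -
  have image_\<sigma>: "\<sigma> ` {..<n} = {..<n}" and inj_\<sigma>: "inj_on \<sigma> {..<n}"
    using \<sigma> by (simp_all add: bij_betw_def)
  have arrows: "arrows_between h (\<sigma> i) (\<sigma> ` S) = arrows_between g i S"
    if "i < n" "S \<subseteq> {..<n}" for i S
  proof -
    have "inj_on \<sigma> S" using inj_\<sigma> that(2) by (rule inj_on_subset)
    then show ?thesis
      unfolding arrows_between_def using h that by (simp add: sum.reindex subset_iff)
  qed
  have all_even: "(\<forall>i<n. even (arrows_between h i (\<sigma> ` S))) \<longleftrightarrow> (\<forall>i<n. even (arrows_between g i S))"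
    if "S \<subseteq> {..<n}" for S
  proof -
    have "(\<forall>i<n. even (arrows_between h i (\<sigma> ` S)))
        \<longleftrightarrow> (\<forall>i\<in>\<sigma> ` {..<n}. even (arrows_between h i (\<sigma> ` S)))"
      unfolding image_\<sigma> by auto
    also have "\<dots> \<longleftrightarrow> (\<forall>i<n. even (arrows_between g i S))"
      using arrows[OF _ that] by auto
    finally show ?thesis .
  qed
  have "image \<sigma> ` Pow {..<n} = Pow {..<n}"
    using bij_betw_image_Pow[OF \<sigma>] by (simp add: bij_betw_def)
  then have "mod2_kernel (n, h) = {S' \<in> image \<sigma> ` Pow {..<n}. \<forall>i<n. even (arrows_between h i S')}"
    by (simp add: mod2_kernel_def)
  also have "\<dots> = image \<sigma> ` {S \<in> Pow {..<n}. \<forall>i<n. even (arrows_between h i (\<sigma> ` S))}"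
    by blast
  also have "\<dots> = image \<sigma> ` mod2_kernel (n, g)"
    using all_even unfolding mod2_kernel_def by (auto intro!: arg_cong[where f = "image (image \<sigma>)"])
  finally show ?thesis .
qed

lemma card_mod2_kernel_relabel:
  assumes "bij_betw \<sigma> {..<n} {..<n}"
    and "\<forall>i j. i < n \<longrightarrow> j < n \<longrightarrow> h (\<sigma> i) (\<sigma> j) = g i j"
  shows "card (mod2_kernel (n, h)) = card (mod2_kernel (n, g))"
proof -
  have "inj_on (image \<sigma>) (Pow {..<n})"
    using assms(1) by (simp add: bij_betw_def inj_on_image_Pow)
  then have "inj_on (image \<sigma>) (mod2_kernel (n, g))"
    by (rule inj_on_subset) (auto simp: mod2_kernel_def)
  then show ?thesis
    using mod2_kernel_relabel[OF assms] by (simp add: card_image)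
qed

lemma mut_step_invariants:
  assumes step: "mut_step G H" and loopless: "\<forall>i. snd G i i = 0"
  shows "fst H = fst G \<and> (\<forall>i. snd H i i = 0) \<and> card (mod2_kernel H) = card (mod2_kernel G)"
proof -
  obtain n g h where G: "G = (n, g)" and H: "H = (n, h)"
    using step unfolding mut_step_def by (metis prod.collapse)
  from step consider (mutation) k where "k < n" "h = mutate k g"
    | (relabel) \<sigma> where "bij_betw \<sigma> {..<n} {..<n}"
        "\<forall>i j. i < n \<longrightarrow> j < n \<longrightarrow> h (\<sigma> i) (\<sigma> j) = g i j"
        "\<forall>i j. (n \<le> i \<or> n \<le> j) \<longrightarrow> h i j = 0"
    unfolding mut_step_def G H by auto
  then show ?thesis
  proof cases
    case mutation
    then show ?thesis
      using card_mod2_kernel_mutate loopless unfolding G H by (simp add: mutate_def)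
  next
    case relabel
    have "h i i = 0" for i
    proof (cases "i < n")
      case True
      then obtain i' where "i' < n" "i = \<sigma> i'"
        using relabel(1) by (metis bij_betw_def imageE lessThan_iff)
      then show ?thesis using relabel(2) loopless unfolding G by simp
    qed (use relabel(3) in simp)
    then show ?thesis using card_mod2_kernel_relabel[OF relabel(1,2)] unfolding G H by simp
  qed
qed

lemma mut_equiv_invariants:
  assumes "mut_equiv G H" "\<forall>i. snd G i i = 0"
  shows "fst H = fst G \<and> (\<forall>i. snd H i i = 0) \<and> card (mod2_kernel H) = card (mod2_kernel G)"
  using assms(1) unfolding mut_equiv_def
proof (induction rule: rtranclp_induct)
  case (step H H')
  then show ?case using mut_step_invariants[of H H'] by simp
qed (use assms(2) in simp)

lemma arrows_between_eq_sum_lessThan: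
  "S \<subseteq> {..<n} \<Longrightarrow> arrows_between m i S = (\<Sum>j<n. if j \<in> S then m i j + m j i else 0)"
  unfolding arrows_between_def by (simp add: sum.If_cases Int_absorb1)

lemma mod2_kernel_graph_of:
  "mod2_kernel (graph_of n es) = {S. S \<subseteq> {..<n} \<and> (\<forall>i\<in>{..<n}. even (\<Sum>j\<in>{..<n}.
     if j \<in> S then length (filter (\<lambda>e. e = (i, j)) es) + length (filter (\<lambda>e. e = (j, i)) es)
     else 0))}"
proof -
  have "arrows_between (snd (graph_of n es)) i S = (\<Sum>j\<in>{..<n}. if j \<in> S
      then length (filter (\<lambda>e. e = (i, j)) es) + length (filter (\<lambda>e. e = (j, i)) es) else 0)"
    if "S \<subseteq> {..<n}" "i < n" for i S
    using that unfolding arrows_between_eq_sum_lessThan[OF that(1)] graph_of_def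
    by (intro sum.cong) auto
  then show ?thesis unfolding mod2_kernel_def by (auto simp: graph_of_def)
qed

lemma mod2_kernel_E6_subset: "mod2_kernel (Tgraph 1 2 2) \<subseteq> {{}}"
proof
  fix S assume "S \<in> mod2_kernel (Tgraph 1 2 2)"
  moreover have "Tgraph 1 2 2 = graph_of 6 [(1,0),(2,0),(3,2),(4,0),(5,4)]"
    by (simp add: Tgraph_def arm_def upt_conv_Cons numeral_eq_Suc)
  ultimately have "S \<subseteq> {..<6}"
    "0 \<notin> S \<and> 1 \<notin> S \<and> 2 \<notin> S \<and> 3 \<notin> S \<and> 4 \<notin> S \<and> 5 \<notin> S"
    by (simp_all add: mod2_kernel_graph_of lessThan_nat_numeral cong: if_cong split: if_split_asm)
  then show "S \<in> {{}}" by (auto simp: lessThan_nat_numeral)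
qed

lemma mod2_kernel_E7_subset: "mod2_kernel (Tgraph 1 2 3) \<subseteq> {{}, {1, 4, 6}}"
proof
  fix S assume "S \<in> mod2_kernel (Tgraph 1 2 3)"
  moreover have "Tgraph 1 2 3 = graph_of 7 [(1,0),(2,0),(3,2),(4,0),(5,4),(6,5)]"
    by (simp add: Tgraph_def arm_def upt_conv_Cons numeral_eq_Suc)
  ultimately have "S \<subseteq> {..<7}"
    "0 \<notin> S \<and> 2 \<notin> S \<and> 3 \<notin> S \<and> 5 \<notin> S \<and> (1 \<in> S \<longleftrightarrow> 4 \<in> S) \<and> (4 \<in> S \<longleftrightarrow> 6 \<in> S)"
    by (simp_all add: mod2_kernel_graph_of lessThan_nat_numeral cong: if_cong split: if_split_asm)
  then show "S \<in> {{}, {1, 4, 6}}" by (auto simp: lessThan_nat_numeral)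
qed

lemma mod2_kernel_affine_E6_subset: "mod2_kernel (Tgraph 2 2 2) \<subseteq> {{}, {0, 2, 4, 6}}"
proof
  fix S assume "S \<in> mod2_kernel (Tgraph 2 2 2)"
  moreover have "Tgraph 2 2 2 = graph_of 7 [(1,0),(2,1),(3,0),(4,3),(5,0),(6,5)]"
    by (simp add: Tgraph_def arm_def upt_conv_Cons numeral_eq_Suc)
  ultimately have "S \<subseteq> {..<7}"
    "1 \<notin> S \<and> 3 \<notin> S \<and> 5 \<notin> S
      \<and> (0 \<in> S \<longleftrightarrow> 2 \<in> S) \<and> (2 \<in> S \<longleftrightarrow> 4 \<in> S) \<and> (4 \<in> S \<longleftrightarrow> 6 \<in> S)"
    by (simp_all add: mod2_kernel_graph_of lessThan_nat_numeral cong: if_cong split: if_split_asm)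
  then show "S \<in> {{}, {0, 2, 4, 6}}" by (auto simp: lessThan_nat_numeral)
qed

lemma mod2_kernel_X6_superset: "{{}, {1, 2}} \<subseteq> mod2_kernel X6"
  by (simp add: X6_def mod2_kernel_graph_of lessThan_nat_numeral)

lemma mod2_kernel_X7_superset: "{{}, {1, 3}, {3, 5}} \<subseteq> mod2_kernel X7"
  by (simp add: X7_def mod2_kernel_graph_of lessThan_nat_numeral)

theorem mainTheorem2:
  shows "\<forall>G \<in> {X6, X7}. \<forall>H \<in> {Tgraph 1 2 2, Tgraph 1 2 3, Tgraph 1 2 4,
            Tgraph 2 2 2, Tgraph 1 3 3, Tgraph 1 2 5,
            Sgraph 1 1 1, Sgraph 2 0 2, Sgraph 1 0 4}. \<not> mut_equiv G H"
proof (intro ballI notI)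
  fix G H
  assume G: "G \<in> {X6, X7}"
    and H: "H \<in> {Tgraph 1 2 2, Tgraph 1 2 3, Tgraph 1 2 4, Tgraph 2 2 2, Tgraph 1 3 3,
      Tgraph 1 2 5, Sgraph 1 1 1, Sgraph 2 0 2, Sgraph 1 0 4}"
    and equiv: "mut_equiv G H"
  have "\<forall>i. snd G i i = 0" using G by (auto simp: X6_def X7_def graph_of_def)
  then have size: "fst H = fst G" and card: "card (mod2_kernel H) = card (mod2_kernel G)"
    using mut_equiv_invariants[OF equiv] by auto
  have "card (mod2_kernel X6) \<ge> 2" "card (mod2_kernel X7) \<ge> 3"
    using card_mono[OF finite_mod2_kernel mod2_kernel_X6_superset]
      card_mono[OF finite_mod2_kernel mod2_kernel_X7_superset]
    by (simp_all add: doubleton_eq_iff)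
  moreover have "card (mod2_kernel (Tgraph 1 2 2)) \<le> 1" "card (mod2_kernel (Tgraph 1 2 3)) \<le> 2"
      "card (mod2_kernel (Tgraph 2 2 2)) \<le> 2"
    using card_mono[OF _ mod2_kernel_E6_subset] card_mono[OF _ mod2_kernel_E7_subset]
      card_mono[OF _ mod2_kernel_affine_E6_subset]
    by simp_all
  moreover have "fst X6 = 6" "fst X7 = 7" by (simp_all add: X6_def X7_def graph_of_def)
  moreover have "fst H = 6 \<Longrightarrow> H = Tgraph 1 2 2" "fst H = 7 \<Longrightarrow> H = Tgraph 1 2 3 \<or> H = Tgraph 2 2 2"
    using H by (auto simp: Tgraph_def Sgraph_def graph_of_def)
  ultimately show False using G size card by auto
qed

end
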